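(* Assume $\overline u>0$ and that $\Theta$ contains at least two points. For $x,y\in\mathbb{Z}^d$ define $\alpha^{x,y}(k)=\frac12\bigl(e^{-c|k-x|_1}+e^{-c|k-y|_1}\bigr)$ with $c=\frac1n\ln\bigl(1+\frac{\overline u}{2\|u\|_{\ell^1}}\bigr)$, $n=\max_{i,j\in\Theta}|i-j|_1$, and $W^{x,y}(k)=\sum_{j\in\mathbb{Z}^d}\alpha^{x,y}(j)u(k-j)$. Then for all $x,y,k\in\mathbb{Z}^d$, \[ W^{x,y}(k)\ge\alpha^{x,y}(k)\frac{\overline u}{2}>0, \] and in particular $W^{x,y}(k)\ge\overline u/4$ for $k\in\{x,y\}$.
   Context: $d\ge1$; $|x|_1=\sum_i|x_i|$. $u:\mathbb{Z}^d\to\mathbb{R}$ has finite nonempty support $\Theta$ with $0\in\Theta$; $\overline u=\sum_ku(k)$, $\|u\|_{\ell^1}=\sum_k|u(k)|$. *)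

theory Defs
  imports "HOL-Analysis.Analysis"
begin

definition l1 :: "int ^ 'd::finite \<Rightarrow> int" where
  "l1 x = (\<Sum>i\<in>UNIV. \<bar>x $ i\<bar>)"

definition supp :: "(int ^ 'd::finite \<Rightarrow> real) \<Rightarrow> (int ^ 'd) set" where
  "supp u = {k. u k \<noteq> 0}"

definition ubar :: "(int ^ 'd::finite \<Rightarrow> real) \<Rightarrow> real" where
  "ubar u = (\<Sum>k\<in>supp u. u k)"

definition ul1 :: "(int ^ 'd::finite \<Rightarrow> real) \<Rightarrow> real" where
  "ul1 u = (\<Sum>k\<in>supp u. \<bar>u k\<bar>)"

definition diam_n :: "(int ^ 'd::finite \<Rightarrow> real) \<Rightarrow> int" where
  "diam_n u = Max {l1 (i - j) | i j. i \<in> supp u \<and> j \<in> supp u}"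

definition cconst :: "(int ^ 'd::finite \<Rightarrow> real) \<Rightarrow> real" where
  "cconst u = ln (1 + ubar u / (2 * ul1 u)) / real_of_int (diam_n u)"

definition alpha :: "(int ^ 'd::finite \<Rightarrow> real) \<Rightarrow> int ^ 'd \<Rightarrow> int ^ 'd \<Rightarrow> int ^ 'd \<Rightarrow> real" where
  "alpha u x y k = (exp (- cconst u * l1 (k - x)) + exp (- cconst u * l1 (k - y))) / 2"

definition W :: "(int ^ 'd::finite \<Rightarrow> real) \<Rightarrow> int ^ 'd \<Rightarrow> int ^ 'd \<Rightarrow> int ^ 'd \<Rightarrow> real" where
  "W u x y k = (\<Sum>\<^sub>\<infinity>j\<in>UNIV. alpha u x y j * u (k - j))"

end

theory Submission
  imports Defs
begin

text \<open>Shifting the argument of \<open>alpha\<close> by \<open>m\<close> changes each exponent by at most \<open>c |m|\<^sub>1\<close>,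
  so \<open>alpha (k - m)\<close> differs from \<open>alpha k\<close> by a relative error of at most \<open>exp (c |m|\<^sub>1) - 1\<close>.
  Since \<open>0 \<in> supp u\<close>, every \<open>m \<in> supp u\<close> has \<open>|m|\<^sub>1 = |m - 0|\<^sub>1 \<le> n\<close>, and \<open>c\<close> is chosen exactly so
  that \<open>exp (c n) - 1 = ubar u / (2 ul1 u)\<close>. Hence
  \<open>W k = \<Sum>\<^sub>m alpha (k - m) u m \<ge> alpha k (ubar u - ubar u / (2 ul1 u) \<cdot> ul1 u) = alpha k ubar u / 2\<close>,
  and \<open>alpha x, alpha y \<ge> 1/2\<close>.\<close>

lemma l1_zero [simp]: "l1 0 = 0"
  unfolding l1_def by simp

lemma l1_pos: "v \<noteq> 0 \<Longrightarrow> l1 v > 0"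
proof -
  assume "v \<noteq> 0"
  then obtain i where "v $ i \<noteq> 0"
    by (metis vec_eq_iff zero_index)
  moreover have "\<bar>v $ i\<bar> \<le> l1 v"
    unfolding l1_def by (rule member_le_sum) auto
  ultimately show ?thesis by linarith
qed

lemma abs_l1_diff_le: "\<bar>l1 (v - w) - l1 v\<bar> \<le> l1 w"
proof -
  have "l1 (v - w) \<le> l1 v + l1 w" "l1 v \<le> l1 (v - w) + l1 w"
    unfolding l1_def sum.distrib[symmetric] by (rule sum_mono; simp)+
  then show ?thesis by linarith
qed

lemma abs_exp_minus_one_le:
  fixes t s :: real
  assumes "\<bar>t\<bar> \<le> s"
  shows "\<bar>exp t - 1\<bar> \<le> exp s - 1"
proof -
  have "exp t \<le> exp s" using assms by simp
  moreover have "1 - exp t \<le> s"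
    using exp_ge_add_one_self[of t] assms by linarith
  moreover have "s \<le> exp s - 1"
    using exp_ge_add_one_self[of s] by linarith
  ultimately show ?thesis by linarith
qed

lemma abs_exp_diff_le:
  fixes c s a b :: real
  assumes "c \<ge> 0" and "\<bar>a - b\<bar> \<le> s"
  shows "\<bar>exp (- c * a) - exp (- c * b)\<bar> \<le> exp (- c * b) * (exp (c * s) - 1)"
proof -
  have "\<bar>c * (b - a)\<bar> \<le> c * s"
    using assms by (simp add: abs_mult abs_minus_commute mult_left_mono)
  then have "\<bar>exp (c * (b - a)) - 1\<bar> \<le> exp (c * s) - 1"
    by (rule abs_exp_minus_one_le)
  moreover have "exp (- c * a) - exp (- c * b) = exp (- c * b) * (exp (c * (b - a)) - 1)"
    by (simp add: algebra_simps flip: exp_add)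
  ultimately show ?thesis by (simp add: abs_mult)
qed

lemma abs_alpha_shift_le:
  assumes "cconst u \<ge> 0"
  shows "\<bar>alpha u x y (k - m) - alpha u x y k\<bar> \<le> alpha u x y k * (exp (cconst u * l1 m) - 1)"
proof -
  have shift: "\<bar>exp (- cconst u * l1 (k - m - z)) - exp (- cconst u * l1 (k - z))\<bar>
      \<le> exp (- cconst u * l1 (k - z)) * (exp (cconst u * l1 m) - 1)" for z
  proof -
    have "\<bar>real_of_int (l1 (k - z - m)) - l1 (k - z)\<bar> \<le> l1 m"
      using abs_l1_diff_le[of "k - z" m] by linarith
    from abs_exp_diff_le[OF assms this] show ?thesis
      by (simp add: diff_diff_eq add.commute)
  qed
  show ?thesis
    using shift[of x] shift[of y] unfolding alpha_def by (simp add: abs_le_iff field_simps)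
qed

lemma W_eq_sum_supp:
  assumes "finite (supp u)"
  shows "W u x y k = (\<Sum>m\<in>supp u. alpha u x y (k - m) * u m)"
proof -
  have "bij_betw (\<lambda>m. k - m) UNIV (UNIV :: (int ^ 'a) set)"
    by (rule bij_betwI[where g = "\<lambda>m. k - m"]) auto
  then have "W u x y k = (\<Sum>\<^sub>\<infinity>m\<in>UNIV. alpha u x y (k - m) * u (k - (k - m)))"
    unfolding W_def by (rule infsum_reindex_bij_betw[symmetric])
  also have "\<dots> = (\<Sum>\<^sub>\<infinity>m\<in>supp u. alpha u x y (k - m) * u m)"
    by (rule infsum_cong_neutral) (auto simp: supp_def)
  finally show ?thesis using assms by simp
qed

lemma sum_mult_ge_of_abs_diff_le:
  fixes g u :: "'a \<Rightarrow> real"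
  assumes "\<And>m. m \<in> S \<Longrightarrow> \<bar>g m - a\<bar> \<le> e"
  shows "(\<Sum>m\<in>S. g m * u m) \<ge> a * (\<Sum>m\<in>S. u m) - e * (\<Sum>m\<in>S. \<bar>u m\<bar>)"
proof -
  have "a * u m - e * \<bar>u m\<bar> \<le> g m * u m" if "m \<in> S" for m
  proof -
    have "\<bar>(g m - a) * u m\<bar> \<le> e * \<bar>u m\<bar>"
      unfolding abs_mult using assms[OF that] by (rule mult_right_mono) simp
    then show ?thesis by (simp add: abs_le_iff algebra_simps)
  qed
  then have "(\<Sum>m\<in>S. a * u m - e * \<bar>u m\<bar>) \<le> (\<Sum>m\<in>S. g m * u m)"
    by (rule sum_mono)
  then show ?thesis by (simp add: sum_subtractf sum_distrib_left)
qed

lemma ubar_le_ul1: "ubar u \<le> ul1 u"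
  unfolding ubar_def ul1_def by (rule sum_mono) simp

lemma l1_le_diam_n:
  assumes "finite (supp u)" and "i \<in> supp u" and "j \<in> supp u"
  shows "l1 (i - j) \<le> diam_n u"
proof -
  have "{l1 (i - j) | i j. i \<in> supp u \<and> j \<in> supp u} = (\<lambda>(i, j). l1 (i - j)) ` (supp u \<times> supp u)"
    by auto
  then show ?thesis
    unfolding diam_n_def using assms by (auto intro!: Max_ge)
qed

context
  fixes u :: "int ^ 'd::finite \<Rightarrow> real"
  assumes fin: "finite (supp u)" and zero_in_supp: "0 \<in> supp u"
    and two_points: "\<exists>a\<in>supp u. \<exists>b\<in>supp u. a \<noteq> b"
    and ubar_pos: "ubar u > 0"
begin

lemma diam_n_pos: "diam_n u > 0"
proof -
  obtain a b where "a \<in> supp u" "b \<in> supp u" "a \<noteq> b" using two_points by blast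
  then show ?thesis using l1_pos[of "a - b"] l1_le_diam_n[OF fin] by force
qed

lemma exp_cconst_diam_n: "exp (cconst u * diam_n u) = 1 + ubar u / (2 * ul1 u)"
proof -
  have "ubar u / (2 * ul1 u) > 0" using ubar_pos ubar_le_ul1[of u] by simp
  then show ?thesis using diam_n_pos unfolding cconst_def by simp
qed

lemma cconst_nonneg: "cconst u \<ge> 0"
  using exp_cconst_diam_n diam_n_pos ubar_pos ubar_le_ul1[of u]
  by (simp add: cconst_def)

lemma W_ge_half_alpha: "W u x y k \<ge> alpha u x y k * ubar u / 2"
proof -
  let ?e = "alpha u x y k * (ubar u / (2 * ul1 u))"
  have "\<bar>alpha u x y (k - m) - alpha u x y k\<bar> \<le> ?e" if "m \<in> supp u" for m
  proof -
    have "l1 m \<le> diam_n u" using l1_le_diam_n[OF fin that zero_in_supp] by simp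
    then have "exp (cconst u * l1 m) \<le> exp (cconst u * diam_n u)"
      using cconst_nonneg by (simp add: mult_left_mono)
    then have "exp (cconst u * l1 m) - 1 \<le> ubar u / (2 * ul1 u)"
      unfolding exp_cconst_diam_n by simp
    with abs_alpha_shift_le[OF cconst_nonneg] show ?thesis
      by (rule order_trans[OF _ mult_left_mono]) (simp add: alpha_def add_nonneg_nonneg)
  qed
  from sum_mult_ge_of_abs_diff_le[OF this]
  have "W u x y k \<ge> alpha u x y k * ubar u - ?e * ul1 u"
    unfolding W_eq_sum_supp[OF fin] ubar_def ul1_def .
  moreover have "?e * ul1 u = alpha u x y k * ubar u / 2"
    using ubar_pos ubar_le_ul1[of u] by simp
  ultimately show ?thesis by simp
qed

end

theorem lemmaA4:
  fixes u :: "int ^ 'd::finite \<Rightarrow> real" and x y k :: "int ^ 'd"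
  assumes "finite (supp u)" and "0 \<in> supp u"
    and "\<exists>a\<in>supp u. \<exists>b\<in>supp u. a \<noteq> b"
    and "ubar u > 0"
  shows "W u x y k \<ge> alpha u x y k * ubar u / 2 \<and> alpha u x y k * ubar u / 2 > 0
    \<and> W u x y x \<ge> ubar u / 4 \<and> W u x y y \<ge> ubar u / 4"
proof -
  note W_ge = W_ge_half_alpha[OF assms]
  have "W u x y z \<ge> ubar u / 4" if "alpha u x y z \<ge> 1 / 2" for z
  proof -
    have "ubar u / 4 \<le> alpha u x y z * ubar u / 2"
      using that assms(4) by (simp add: field_simps)
    then show ?thesis using W_ge[of x y z] by linarith
  qed
  moreover have "alpha u x y x \<ge> 1 / 2" "alpha u x y y \<ge> 1 / 2"
    unfolding alpha_def by (simp_all add: add_nonneg_nonneg)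
  moreover have "alpha u x y k > 0"
    unfolding alpha_def by (simp add: add_pos_pos)
  ultimately show ?thesis
    using W_ge[of x y k] assms(4) by simp
qed

end
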